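(* For all $\vec z,\vec a\in\mathbb{C}^n$ (with $d_{\tan}$ possibly $+\infty$), \[ \tfrac12\big\||\pi_{\vec z}\rangle\langle\pi_{\vec z}|-|\pi_{\vec a}\rangle\langle\pi_{\vec a}|\big\|_1=\big\||\pi_{\vec z}\rangle\langle\pi_{\vec z}|-|\pi_{\vec a}\rangle\langle\pi_{\vec a}|\big\|_{\mathrm{op}}\le d_{\tan}(|\pi_{\vec z}\rangle,|\pi_{\vec a}\rangle). \]
   Context: For $\vec z\in\mathbb{C}^n$, $|\pi_{\vec z}\rangle=\bigotimes_{i=1}^n \frac{|0\rangle+z_i|1\rangle}{\sqrt{1+|z_i|^2}}$; the tangent distance is $d_{\tan}(|\pi_{\vec z}\rangle,|\pi_{\vec a}\rangle)=\big(\sum_{i=1}^n|\frac{z_i-a_i}{1+z_i^*a_i}|^2\big)^{1/2}$ (a summand with vanishing denominator is $+\infty$). $\|\cdot\|_1$ is the trace norm and $\|\cdot\|_{\mathrm{op}}$ the operator norm. *)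

theory Defs
  imports "Jordan_Normal_Form.Char_Poly" "HOL-Library.Extended_Real"
begin

definition cvec_norm :: "complex vec \<Rightarrow> real" where
  "cvec_norm x = sqrt (\<Sum>i<dim_vec x. (cmod (x $ i))\<^sup>2)"

definition cadj :: "complex mat \<Rightarrow> complex mat" where
  "cadj A = mat (dim_col A) (dim_row A) (\<lambda>(i,j). cnj (A $$ (j,i)))"

definition op_norm :: "complex mat \<Rightarrow> real" where
  "op_norm A = Sup {cvec_norm (A *\<^sub>v x) | x. x \<in> carrier_vec (dim_col A) \<and> cvec_norm x = 1}"

text \<open>Trace norm: sum of singular values, i.e. of square roots of the eigenvalues
  (with algebraic multiplicity) of the positive semidefinite matrix A^* A.\<close>
definition trace_norm :: "complex mat \<Rightarrow> real" where
  "trace_norm A = sum_mset (image_mset (\<lambda>\<mu>. sqrt (Re \<mu>)) (proots (char_poly (cadj A * A))))"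

text \<open>Product state |pi_z> in (C^2)^{\<otimes> n}, n = length z; basis index j < 2^n,
  where bit i of j is the state of qubit i.\<close>
definition prod_state :: "complex list \<Rightarrow> complex vec" where
  "prod_state z = vec (2 ^ length z)
     (\<lambda>j. \<Prod>i<length z. (if bit j i then z ! i else 1) / complex_of_real (sqrt (1 + (cmod (z ! i))\<^sup>2)))"

definition proj :: "complex vec \<Rightarrow> complex mat" where
  "proj v = mat (dim_vec v) (dim_vec v) (\<lambda>(i,j). v $ i * cnj (v $ j))"

definition d_tan :: "complex list \<Rightarrow> complex list \<Rightarrow> ereal" where
  "d_tan z a = (if \<exists>i<length z. 1 + cnj (z ! i) * a ! i = 0 then \<infinity>
     else ereal (sqrt (\<Sum>i<length z. (cmod ((z ! i - a ! i) / (1 + cnj (z ! i) * a ! i)))\<^sup>2)))"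

end

theory Submission
  imports Defs "Jordan_Normal_Form.Jordan_Normal_Form_Existence" "HOL-Analysis.L2_Norm"
begin

text \<open>For unit vectors \<open>u, v\<close> with infidelity \<open>s = 1 - |\<langle>u,v\<rangle>|\<^sup>2\<close>, the difference
  \<open>\<Delta> = |u\<rangle>\<langle>u| - |v\<rangle>\<langle>v|\<close> maps everything into \<open>span {u, v}\<close> and satisfies \<open>\<Delta>\<^sup>3 = s \<Delta>\<close>,
  so \<open>\<Delta>\<^sup>2\<close> has eigenvalues in \<open>{0, s}\<close>; since \<open>tr \<Delta>\<^sup>2 = 2 s\<close>, the value \<open>s\<close> occurs
  exactly twice when \<open>s \<noteq> 0\<close>. Hence \<open>\<Delta>\<close> has singular values \<open>\<surd>s, \<surd>s, 0, \<dots>\<close>, and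
  \<open>\<parallel>\<Delta>\<parallel>\<^sub>1 = 2\<surd>s = 2 \<parallel>\<Delta>\<parallel>\<^sub>o\<^sub>p\<close>.

  For product states the overlap factorises over the qubits:
  \<open>|\<langle>\<pi>\<^sub>z,\<pi>\<^sub>a\<rangle>|\<^sup>2 = \<Prod>\<^sub>i q\<^sub>i\<close> with \<open>1 - q\<^sub>i = |z\<^sub>i - a\<^sub>i|\<^sup>2 / ((1 + |z\<^sub>i|\<^sup>2)(1 + |a\<^sub>i|\<^sup>2))\<close> by
  Lagrange's identity, and this is at most \<open>|(z\<^sub>i - a\<^sub>i) / (1 + z\<^sub>i\<^sup>* a\<^sub>i)|\<^sup>2\<close>. The bound
  \<open>1 - \<Prod>\<^sub>i q\<^sub>i \<le> \<Sum>\<^sub>i (1 - q\<^sub>i)\<close> for \<open>q\<^sub>i \<in> [0,1]\<close> then gives \<open>s \<le> d\<^sub>t\<^sub>a\<^sub>n\<^sup>2\<close>.\<close>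

lemma sum_lessThan_double:
  fixes h :: "nat \<Rightarrow> 'a::comm_monoid_add"
  shows "(\<Sum>j<2*m. h j) = (\<Sum>k<m. h (2*k) + h (2*k+1))"
  by (induction m) (auto simp: add.assoc)

lemma sum_bits_prod:
  fixes g :: "nat \<Rightarrow> bool \<Rightarrow> 'a::comm_semiring_1"
  shows "(\<Sum>j::nat<2^n. \<Prod>i<n. g i (bit j i)) = (\<Prod>i<n. g i False + g i True)"
proof (induction n arbitrary: g)
  case 0
  then show ?case by simp
next
  case (Suc n)
  have bit_high: "bit (2*k) (Suc i) = bit k i" "bit (Suc (2*k)) (Suc i) = bit k i" for k i :: nat
    by (simp_all add: bit_Suc)
  have bit_low: "\<not> bit (2*k) 0" "bit (Suc (2*k)) 0" for k :: nat
    by (simp_all add: bit_0)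
  have "(\<Sum>j::nat<2^Suc n. \<Prod>i<Suc n. g i (bit j i))
      = (\<Sum>k::nat<2^n. (\<Prod>i<Suc n. g i (bit (2*k) i)) + (\<Prod>i<Suc n. g i (bit (2*k+1) i)))"
    by (simp add: sum_lessThan_double del: prod.lessThan_Suc)
  also have "\<dots> = (\<Sum>k::nat<2^n. (g 0 False + g 0 True) * (\<Prod>i<n. g (Suc i) (bit k i)))"
    by (simp add: prod.lessThan_Suc_shift bit_low bit_high distrib_right del: prod.lessThan_Suc)
  also have "\<dots> = (g 0 False + g 0 True) * (\<Prod>i<n. g (Suc i) False + g (Suc i) True)"
    by (simp add: sum_distrib_left[symmetric] Suc.IH[of "\<lambda>i. g (Suc i)"])
  also have "\<dots> = (\<Prod>i<Suc n. g i False + g i True)"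
    by (simp add: prod.lessThan_Suc_shift del: prod.lessThan_Suc)
  finally show ?case .
qed

lemma one_minus_prod_le_sum:
  fixes q :: "nat \<Rightarrow> real"
  assumes "\<And>i. i < n \<Longrightarrow> 0 \<le> q i \<and> q i \<le> 1"
  shows "1 - (\<Prod>i<n. q i) \<le> (\<Sum>i<n. 1 - q i)"
  using assms
proof (induction n)
  case 0
  then show ?case by simp
next
  case (Suc n)
  have IH: "1 - (\<Prod>i<n. q i) \<le> (\<Sum>i<n. 1 - q i)" using Suc by simp
  have prod_bounds: "0 \<le> (\<Prod>i<n. q i)" "(\<Prod>i<n. q i) \<le> 1"
    using Suc.prems by (auto intro: prod_nonneg prod_le_1)
  have "1 - (\<Prod>i<Suc n. q i) = (1 - (\<Prod>i<n. q i)) + (\<Prod>i<n. q i) * (1 - q n)"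
    by (simp add: algebra_simps)
  also have "\<dots> \<le> (\<Sum>i<n. 1 - q i) + 1 * (1 - q n)"
    using IH prod_bounds Suc.prems[of n] by (intro add_mono mult_mono) auto
  finally show ?case by simp
qed

lemma cmod_one_plus_cnj_mult_sq:
  fixes z a :: complex
  shows "(cmod (1 + cnj z * a))\<^sup>2 = (1 + (cmod z)\<^sup>2) * (1 + (cmod a)\<^sup>2) - (cmod (z - a))\<^sup>2"
  unfolding cmod_power2 by (simp add: algebra_simps power2_eq_square)

lemma of_real_cmod_sq: "(complex_of_real (cmod c))\<^sup>2 = c * cnj c"
  by (metis complex_norm_square of_real_power)

lemma sum_list_two_valued:
  assumes "set L \<subseteq> {0, x}" and "g 0 = 0"
  shows "sum_list (map g L) = of_nat (count_list L x) * g x"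
  using assms by (induction L) (auto simp: algebra_simps)

lemma proots_prod_linear_factors: "proots (\<Prod>a\<leftarrow>L. [:- a, 1:]) = mset (L :: complex list)"
proof -
  have "0 \<notin> set (map (\<lambda>a. [:- a, 1:]) L)"
    by auto
  then have "proots (\<Prod>a\<leftarrow>L. [:- a, 1:]) = (\<Sum>a\<leftarrow>L. {#a#})"
    using proots_prod_list by (fastforce simp: o_def)
  also have "\<dots> = mset L"
    by (induction L) auto
  finally show ?thesis .
qed

section \<open>The standard inner product on \<open>\<complex>\<^sup>n\<close>\<close>

definition cinner :: "complex vec \<Rightarrow> complex vec \<Rightarrow> complex" where
  "cinner x y = (\<Sum>i<dim_vec x. cnj (x$i) * y$i)"

lemma cinner_lincomb_right:
  assumes "x \<in> carrier_vec N" "u \<in> carrier_vec N" "v \<in> carrier_vec N"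
  shows "cinner x (vec N (\<lambda>i. a * u$i - b * v$i)) = a * cinner x u - b * cinner x v"
proof -
  have "cinner x (vec N (\<lambda>i. a * u$i - b * v$i))
      = (\<Sum>i<N. a * (cnj (x$i) * u$i) - b * (cnj (x$i) * v$i))"
    using assms by (auto simp: cinner_def algebra_simps intro!: sum.cong)
  then show ?thesis
    using assms by (simp add: cinner_def sum_subtractf sum_distrib_left)
qed

lemma cinner_lincomb_left:
  assumes "y \<in> carrier_vec N" "u \<in> carrier_vec N" "v \<in> carrier_vec N"
  shows "cinner (vec N (\<lambda>i. a * u$i - b * v$i)) y = cnj a * cinner u y - cnj b * cinner v y"
proof -
  have "cinner (vec N (\<lambda>i. a * u$i - b * v$i)) y
      = (\<Sum>i<N. cnj a * (cnj (u$i) * y$i) - cnj b * (cnj (v$i) * y$i))"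
    using assms by (auto simp: cinner_def algebra_simps intro!: sum.cong)
  then show ?thesis
    using assms by (simp add: cinner_def sum_subtractf sum_distrib_left)
qed

lemma cinner_commute_cnj: "dim_vec x = dim_vec y \<Longrightarrow> cinner x y = cnj (cinner y x)"
  unfolding cinner_def by (simp add: mult.commute)

lemma cinner_self: "cinner x x = of_real ((cvec_norm x)\<^sup>2)"
proof -
  have "cinner x x = (\<Sum>i<dim_vec x. of_real ((cmod (x$i))\<^sup>2))"
    unfolding cinner_def by (intro sum.cong refl) (metis complex_norm_square mult.commute)
  then show ?thesis
    unfolding cvec_norm_def by (simp add: sum_nonneg)
qed

lemma cvec_norm_nonneg: "cvec_norm x \<ge> 0"
  unfolding cvec_norm_def by (simp add: sum_nonneg)

lemma cvec_norm_eq_sqrt: "cinner x x = of_real r \<Longrightarrow> cvec_norm x = sqrt r"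
  using cinner_self[of x] cvec_norm_nonneg[of x] by (metis of_real_eq_iff real_sqrt_unique)

lemma cinner_Cauchy_Schwarz:
  assumes "dim_vec x = dim_vec y"
  shows "cmod (cinner x y) \<le> cvec_norm x * cvec_norm y"
proof -
  have "cmod (cinner x y) \<le> (\<Sum>i<dim_vec x. cmod (cnj (x$i) * y$i))"
    unfolding cinner_def by (rule norm_sum)
  also have "\<dots> = (\<Sum>i<dim_vec x. \<bar>cmod (x$i)\<bar> * \<bar>cmod (y$i)\<bar>)"
    by (simp add: norm_mult)
  also have "\<dots> \<le> L2_set (\<lambda>i. cmod (x$i)) {..<dim_vec x} * L2_set (\<lambda>i. cmod (y$i)) {..<dim_vec x}"
    by (rule L2_set_mult_ineq)
  also have "\<dots> = cvec_norm x * cvec_norm y"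
    using assms by (simp add: L2_set_def cvec_norm_def)
  finally show ?thesis .
qed

section \<open>Trace and eigenvalues\<close>

definition mat_trace :: "complex mat \<Rightarrow> complex" where
  "mat_trace A = (\<Sum>i<dim_row A. A$$(i,i))"

lemma mat_trace_mult_commute:
  assumes A: "A \<in> carrier_mat n m" and B: "B \<in> carrier_mat m n"
  shows "mat_trace (A * B) = mat_trace (B * A)"
proof -
  have "mat_trace (A * B) = (\<Sum>i<n. \<Sum>k<m. A$$(i,k) * B$$(k,i))"
    using A B by (simp add: mat_trace_def scalar_prod_def atLeast0LessThan)
  also have "\<dots> = (\<Sum>k<m. \<Sum>i<n. B$$(k,i) * A$$(i,k))"
    by (subst sum.swap) (simp add: mult.commute)
  also have "\<dots> = mat_trace (B * A)"
    using A B by (simp add: mat_trace_def scalar_prod_def atLeast0LessThan)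
  finally show ?thesis .
qed

lemma mat_trace_similar:
  assumes "similar_mat A B"
  shows "mat_trace A = mat_trace B"
proof -
  obtain n P Q where "{A, B, P, Q} \<subseteq> carrier_mat n n"
    and QP: "Q * P = 1\<^sub>m n" and A: "A = P * B * Q"
    using similar_matD[OF assms] by blast
  then have B: "B \<in> carrier_mat n n" and P: "P \<in> carrier_mat n n" and Q: "Q \<in> carrier_mat n n"
    by auto
  have "mat_trace A = mat_trace (Q * (P * B))"
    using A mat_trace_mult_commute[of "P * B" n n Q] B P Q by auto
  also have "Q * (P * B) = B"
    using B P Q QP by (simp add: assoc_mult_mat[symmetric, of Q n n P n B n])
  finally show ?thesis .
qed

lemma mat_trace_eq_sum_diag: "mat_trace A = sum_list (diag_mat A)"
  by (simp add: mat_trace_def diag_mat_def sum_set_upt_conv_sum_list_nat[symmetric] atLeast0LessThan)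

lemma char_poly_factorized_trace:
  assumes "M \<in> carrier_mat N N"
  obtains L where "char_poly M = (\<Prod>a\<leftarrow>L. [:- a, 1:])" and "sum_list L = mat_trace M"
proof -
  obtain es where "char_poly M = (\<Prod>a\<leftarrow>es. [:- a, 1:])"
    using char_poly_factorized[OF assms] by blast
  then obtain n_as where "jordan_nf M n_as"
    using jordan_nf_exists[OF assms] by blast
  then have sim: "similar_mat M (jordan_matrix n_as)"
    unfolding jordan_nf_def by simp
  then have "jordan_matrix n_as \<in> carrier_mat N N"
    using assms similar_matD by fastforce
  moreover have "upper_triangular (jordan_matrix n_as)"
    unfolding upper_triangular_def using jordan_matrix_upper_triangular by auto
  ultimately have "char_poly (jordan_matrix n_as) = (\<Prod>a\<leftarrow>diag_mat (jordan_matrix n_as). [:- a, 1:])"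
    by (rule char_poly_upper_triangular)
  then show ?thesis
    using that char_poly_similar[OF sim] mat_trace_similar[OF sim] mat_trace_eq_sum_diag
    by metis
qed

section \<open>Difference of two rank-one projectors\<close>

abbreviation diff_proj :: "complex vec \<Rightarrow> complex vec \<Rightarrow> complex mat" where
  "diff_proj u v \<equiv> proj u - proj v"

abbreviation infidelity :: "complex vec \<Rightarrow> complex vec \<Rightarrow> real" where
  "infidelity u v \<equiv> 1 - (cmod (cinner u v))\<^sup>2"

context
  fixes N :: nat and u v :: "complex vec"
  assumes u: "u \<in> carrier_vec N" and v: "v \<in> carrier_vec N"
    and uu: "cinner u u = 1" and vv: "cinner v v = 1"
begin

lemma dim_vec_unit_pair: "dim_vec u = N" "dim_vec v = N"
  using u v by auto

lemma diff_proj_carrier: "diff_proj u v \<in> carrier_mat N N"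
  using u v by (auto simp: proj_def)

lemma dim_diff_proj: "dim_row (diff_proj u v) = N" "dim_col (diff_proj u v) = N"
  using diff_proj_carrier by auto

lemma diff_proj_mult_carrier: "y \<in> carrier_vec N \<Longrightarrow> diff_proj u v *\<^sub>v y \<in> carrier_vec N"
  using diff_proj_carrier by auto

lemma diff_proj_index:
  "i < N \<Longrightarrow> j < N \<Longrightarrow> diff_proj u v $$ (i,j) = u$i * cnj (u$j) - v$i * cnj (v$j)"
  using u v by (simp add: proj_def)

lemma cinner_vu: "cinner v u = cnj (cinner u v)"
  using cinner_commute_cnj[of v u] dim_vec_unit_pair by simp

lemma diff_proj_mult_vec:
  assumes y: "y \<in> carrier_vec N"
  shows "diff_proj u v *\<^sub>v y = vec N (\<lambda>i. cinner u y * u$i - cinner v y * v$i)"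
proof (rule eq_vecI)
  fix i
  assume "i < dim_vec (vec N (\<lambda>i. cinner u y * u$i - cinner v y * v$i))"
  then have i: "i < N" by simp
  have "(diff_proj u v *\<^sub>v y) $ i = (\<Sum>j<N. diff_proj u v $$ (i,j) * y $ j)"
    using i y dim_diff_proj
    by (subst index_mult_mat_vec) (auto simp: scalar_prod_def atLeast0LessThan)
  also have "\<dots> = (\<Sum>j<N. u$i * (cnj (u$j) * y$j) - v$i * (cnj (v$j) * y$j))"
    using i by (intro sum.cong) (auto simp: diff_proj_index algebra_simps)
  also have "\<dots> = cinner u y * u$i - cinner v y * v$i"
    by (simp add: sum_subtractf sum_distrib_left[symmetric] cinner_def dim_vec_unit_pair mult.commute)
  finally show "(diff_proj u v *\<^sub>v y) $ i = vec N (\<lambda>i. cinner u y * u$i - cinner v y * v$i) $ i"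
    using i by simp
qed (use dim_diff_proj in simp)

lemma cinner_u_diff_proj:
  "y \<in> carrier_vec N \<Longrightarrow> cinner u (diff_proj u v *\<^sub>v y) = cinner u y - cinner v y * cinner u v"
  by (simp add: diff_proj_mult_vec cinner_lincomb_right[OF u u v] uu)

lemma cinner_v_diff_proj:
  "y \<in> carrier_vec N \<Longrightarrow> cinner v (diff_proj u v *\<^sub>v y) = cinner u y * cnj (cinner u v) - cinner v y"
  by (simp add: diff_proj_mult_vec cinner_lincomb_right[OF v u v] vv cinner_vu)

lemma cinner_u_diff_proj_sq:
  "y \<in> carrier_vec N \<Longrightarrow>
    cinner u (diff_proj u v *\<^sub>v (diff_proj u v *\<^sub>v y)) = of_real (infidelity u v) * cinner u y"
  by (simp add: cinner_u_diff_proj cinner_v_diff_proj diff_proj_mult_carrier of_real_cmod_sq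
      algebra_simps)

lemma cinner_v_diff_proj_sq:
  "y \<in> carrier_vec N \<Longrightarrow>
    cinner v (diff_proj u v *\<^sub>v (diff_proj u v *\<^sub>v y)) = of_real (infidelity u v) * cinner v y"
  by (simp add: cinner_u_diff_proj cinner_v_diff_proj diff_proj_mult_carrier of_real_cmod_sq
      algebra_simps)

lemma cinner_diff_proj_self:
  "y \<in> carrier_vec N \<Longrightarrow> cinner (diff_proj u v *\<^sub>v y) (diff_proj u v *\<^sub>v y)
     = cnj (cinner u y) * cinner u (diff_proj u v *\<^sub>v y)
       - cnj (cinner v y) * cinner v (diff_proj u v *\<^sub>v y)"
  by (subst (1) diff_proj_mult_vec) (auto simp: cinner_lincomb_left[OF diff_proj_mult_carrier u v])

lemma cinner_diff_proj_sq:
  assumes y: "y \<in> carrier_vec N"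
  shows "cinner y (diff_proj u v *\<^sub>v (diff_proj u v *\<^sub>v y))
    = cinner (diff_proj u v *\<^sub>v y) (diff_proj u v *\<^sub>v y)"
proof -
  have "cinner y (diff_proj u v *\<^sub>v (diff_proj u v *\<^sub>v y))
      = cinner u (diff_proj u v *\<^sub>v y) * cinner y u - cinner v (diff_proj u v *\<^sub>v y) * cinner y v"
    using y by (simp add: diff_proj_mult_vec[OF diff_proj_mult_carrier[OF y]]
        cinner_lincomb_right[OF y u v])
  then show ?thesis
    using y by (simp add: cinner_diff_proj_self cinner_commute_cnj[of y u] cinner_commute_cnj[of y v] dim_vec_unit_pair mult.commute)
qed

lemma diff_proj_cube:
  assumes y: "y \<in> carrier_vec N"
  shows "diff_proj u v *\<^sub>v (diff_proj u v *\<^sub>v (diff_proj u v *\<^sub>v y))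
    = of_real (infidelity u v) \<cdot>\<^sub>v (diff_proj u v *\<^sub>v y)"
proof -
  have "diff_proj u v *\<^sub>v (diff_proj u v *\<^sub>v (diff_proj u v *\<^sub>v y))
      = vec N (\<lambda>i. of_real (infidelity u v) * (cinner u y * u$i - cinner v y * v$i))"
    using y by (simp add: diff_proj_mult_vec[of "diff_proj u v *\<^sub>v (diff_proj u v *\<^sub>v y)"]
        diff_proj_mult_carrier cinner_u_diff_proj_sq cinner_v_diff_proj_sq right_diff_distrib mult.assoc
        del: of_real_diff of_real_power)
  also have "\<dots> = of_real (infidelity u v) \<cdot>\<^sub>v (diff_proj u v *\<^sub>v y)"
    by (rule eq_vecI) (auto simp: diff_proj_mult_vec[OF y])
  finally show ?thesis .
qed

lemma norm_diff_proj_sq: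
  assumes y: "y \<in> carrier_vec N"
  shows "cvec_norm (diff_proj u v *\<^sub>v (diff_proj u v *\<^sub>v y))
    = sqrt (infidelity u v) * cvec_norm (diff_proj u v *\<^sub>v y)"
proof -
  let ?w = "diff_proj u v *\<^sub>v y"
  have "cinner (diff_proj u v *\<^sub>v ?w) (diff_proj u v *\<^sub>v ?w)
      = of_real (infidelity u v) * cnj (cinner ?w ?w)"
    using y by (simp add: cinner_diff_proj_self diff_proj_mult_carrier
        cinner_u_diff_proj_sq cinner_v_diff_proj_sq algebra_simps)
  also have "\<dots> = of_real (infidelity u v * (cvec_norm ?w)\<^sup>2)"
    by (metis cinner_self complex_cnj_complex_of_real of_real_mult)
  finally have "cvec_norm (diff_proj u v *\<^sub>v ?w) = sqrt (infidelity u v * (cvec_norm ?w)\<^sup>2)"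
    by (rule cvec_norm_eq_sqrt)
  then show ?thesis
    by (simp add: real_sqrt_mult cvec_norm_nonneg)
qed

lemma cvec_norm_unit: "cvec_norm u = 1" "cvec_norm v = 1"
  using cvec_norm_eq_sqrt[of u 1] cvec_norm_eq_sqrt[of v 1] uu vv by simp_all

lemma infidelity_nonneg: "infidelity u v \<ge> 0"
proof -
  have "cmod (cinner u v) \<le> 1"
    using cinner_Cauchy_Schwarz[of u v] dim_vec_unit_pair cvec_norm_unit by simp
  then show ?thesis
    by (simp add: power_le_one)
qed

lemma norm_diff_proj_u: "cvec_norm (diff_proj u v *\<^sub>v u) = sqrt (infidelity u v)"
  by (rule cvec_norm_eq_sqrt)
    (use u in \<open>simp add: cinner_diff_proj_self cinner_u_diff_proj cinner_v_diff_proj uu cinner_vu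
       of_real_cmod_sq algebra_simps\<close>)

text \<open>By Cauchy-Schwarz, \<open>\<parallel>\<Delta>x\<parallel>\<^sup>2 = \<langle>x, \<Delta>\<^sup>2x\<rangle> \<le> \<parallel>\<Delta>(\<Delta>x)\<parallel> = \<surd>s \<parallel>\<Delta>x\<parallel>\<close> for a unit vector \<open>x\<close>.\<close>

lemma norm_diff_proj_le:
  assumes x: "x \<in> carrier_vec N" and unit: "cvec_norm x = 1"
  shows "cvec_norm (diff_proj u v *\<^sub>v x) \<le> sqrt (infidelity u v)"
proof -
  let ?w = "diff_proj u v *\<^sub>v x"
  have "cinner x (diff_proj u v *\<^sub>v ?w) = of_real ((cvec_norm ?w)\<^sup>2)"
    by (metis cinner_diff_proj_sq[OF x] cinner_self)
  then have "(cvec_norm ?w)\<^sup>2 = cmod (cinner x (diff_proj u v *\<^sub>v ?w))"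
    by (metis norm_of_real abs_of_nonneg zero_le_power2)
  also have "\<dots> \<le> cvec_norm x * cvec_norm (diff_proj u v *\<^sub>v ?w)"
    by (rule cinner_Cauchy_Schwarz) (use x diff_proj_carrier in auto)
  also have "\<dots> = sqrt (infidelity u v) * cvec_norm ?w"
    using unit norm_diff_proj_sq[OF x] by simp
  finally have "cvec_norm ?w * cvec_norm ?w \<le> sqrt (infidelity u v) * cvec_norm ?w"
    by (simp add: power2_eq_square)
  then show ?thesis
    using cvec_norm_nonneg[of ?w] infidelity_nonneg
    by (cases "cvec_norm ?w = 0") auto
qed

lemma op_norm_diff_proj: "op_norm (diff_proj u v) = sqrt (infidelity u v)"
  unfolding op_norm_def
proof (rule cSup_eq_maximum)
  show "sqrt (infidelity u v)
    \<in> {cvec_norm (diff_proj u v *\<^sub>v x) |x. x \<in> carrier_vec (dim_col (diff_proj u v)) \<and> cvec_norm x = 1}"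
    using norm_diff_proj_u cvec_norm_unit u dim_diff_proj by force
qed (use norm_diff_proj_le dim_diff_proj in auto)

lemma cadj_diff_proj: "cadj (diff_proj u v) = diff_proj u v"
  by (rule eq_matI) (use u v in \<open>auto simp: cadj_def proj_def\<close>)

lemma mat_trace_diff_proj_sq: "mat_trace (diff_proj u v * diff_proj u v) = 2 * of_real (infidelity u v)"
proof -
  have diag: "(diff_proj u v * diff_proj u v) $$ (i,i) = cnj (u$i) * u$i - cnj (v$i) * u$i * cinner u v
      - cnj (u$i) * v$i * cnj (cinner u v) + cnj (v$i) * v$i"
    if i: "i < N" for i
  proof -
    have "(diff_proj u v * diff_proj u v) $$ (i,i) = (\<Sum>k<N. diff_proj u v $$ (i,k) * diff_proj u v $$ (k,i))"
      using i dim_diff_proj by (simp add: scalar_prod_def atLeast0LessThan)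
    also have "\<dots> = (\<Sum>k<N. u$i * cnj (u$i) * (cnj (u$k) * u$k) - u$i * cnj (v$i) * (cnj (u$k) * v$k)
        - v$i * cnj (u$i) * (cnj (v$k) * u$k) + v$i * cnj (v$i) * (cnj (v$k) * v$k))"
      using i by (intro sum.cong) (auto simp: diff_proj_index algebra_simps)
    also have "\<dots> = u$i * cnj (u$i) * cinner u u - u$i * cnj (v$i) * cinner u v
        - v$i * cnj (u$i) * cinner v u + v$i * cnj (v$i) * cinner v v"
      by (simp add: sum.distrib sum_subtractf sum_distrib_left cinner_def dim_vec_unit_pair)
    finally show ?thesis
      by (simp add: uu vv cinner_vu algebra_simps)
  qed
  have "mat_trace (diff_proj u v * diff_proj u v) = (\<Sum>i<N. cnj (u$i) * u$i
      - cnj (v$i) * u$i * cinner u v - cnj (u$i) * v$i * cnj (cinner u v) + cnj (v$i) * v$i)"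
    unfolding mat_trace_def
  proof (rule sum.cong)
    show "{..<dim_row (diff_proj u v * diff_proj u v)} = {..<N}"
      using dim_diff_proj by simp
  qed (simp only: lessThan_iff diag)
  also have "\<dots> = cinner u u - cinner v u * cinner u v - cinner u v * cnj (cinner u v) + cinner v v"
    by (simp only: sum.distrib sum_subtractf sum_distrib_right[symmetric] dim_vec_unit_pair
        cinner_def[of u u] cinner_def[of v u] cinner_def[of u v] cinner_def[of v v])
  finally show ?thesis
    by (simp add: uu vv cinner_vu of_real_cmod_sq algebra_simps)
qed

lemma eigenvalue_diff_proj_sq:
  assumes "eigenvalue (diff_proj u v * diff_proj u v) a"
  shows "a \<in> {0, of_real (infidelity u v)}"
proof -
  have M: "diff_proj u v * diff_proj u v \<in> carrier_mat N N"
    using diff_proj_carrier by auto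
  obtain w where w: "w \<in> carrier_vec N" and "w \<noteq> 0\<^sub>v N"
    and "(diff_proj u v * diff_proj u v) *\<^sub>v w = a \<cdot>\<^sub>v w"
    using assms M unfolding eigenvalue_def eigenvector_def by auto
  then have sq: "diff_proj u v *\<^sub>v (diff_proj u v *\<^sub>v w) = a \<cdot>\<^sub>v w"
    using diff_proj_carrier by simp
  obtain i where i: "i < N" and wi: "w $ i \<noteq> 0"
    using w \<open>w \<noteq> 0\<^sub>v N\<close> by (metis carrier_vecD eq_vecI index_zero_vec)
  have "diff_proj u v *\<^sub>v (diff_proj u v *\<^sub>v (a \<cdot>\<^sub>v w)) = (a * a) \<cdot>\<^sub>v w"
    using sq w diff_proj_carrier
    by (simp add: mult_mat_vec diff_proj_mult_carrier smult_smult_assoc)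
  moreover have "diff_proj u v *\<^sub>v (diff_proj u v *\<^sub>v (a \<cdot>\<^sub>v w)) = (of_real (infidelity u v) * a) \<cdot>\<^sub>v w"
    using diff_proj_cube[OF diff_proj_mult_carrier[OF w]] unfolding sq
    by (simp add: smult_smult_assoc)
  ultimately have "((a * a) \<cdot>\<^sub>v w) $ i = ((of_real (infidelity u v) * a) \<cdot>\<^sub>v w) $ i"
    by simp
  then have "a * (a - of_real (infidelity u v)) * w $ i = 0"
    using i w by (simp add: algebra_simps)
  then show ?thesis
    using wi by auto
qed

lemma trace_norm_diff_proj: "trace_norm (diff_proj u v) = 2 * sqrt (infidelity u v)"
proof -
  let ?s = "infidelity u v"
  have M: "diff_proj u v * diff_proj u v \<in> carrier_mat N N"
    using diff_proj_carrier by auto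
  obtain L where cp: "char_poly (diff_proj u v * diff_proj u v) = (\<Prod>a\<leftarrow>L. [:- a, 1:])"
    and "sum_list L = mat_trace (diff_proj u v * diff_proj u v)"
    by (rule char_poly_factorized_trace[OF M])
  then have tr: "sum_list L = 2 * of_real ?s"
    by (simp only: mat_trace_diff_proj_sq)
  have L: "set L \<subseteq> {0, of_real ?s}"
  proof
    fix a
    assume "a \<in> set L"
    then have "poly (char_poly (diff_proj u v * diff_proj u v)) a = 0"
      unfolding cp by (auto simp: poly_prod_list)
    then show "a \<in> {0, of_real ?s}"
      using eigenvalue_diff_proj_sq eigenvalue_root_char_poly[OF M] by simp
  qed
  have "trace_norm (diff_proj u v) = sum_list (map (\<lambda>\<mu>. sqrt (Re \<mu>)) L)"
    unfolding trace_norm_def cadj_diff_proj cp proots_prod_linear_factors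
    by (simp only: mset_map[symmetric] sum_mset_sum_list)
  also have "\<dots> = of_nat (count_list L (of_real ?s)) * sqrt ?s"
    using sum_list_two_valued[OF L, of "\<lambda>\<mu>. sqrt (Re \<mu>)"] by simp
  finally have trace_norm: "trace_norm (diff_proj u v) = of_nat (count_list L (of_real ?s)) * sqrt ?s" .
  have "of_nat (count_list L (of_real ?s)) * complex_of_real ?s = 2 * of_real ?s"
    using sum_list_two_valued[OF L, of id] tr by simp
  then have "?s = 0 \<or> of_nat (count_list L (of_real ?s)) = (2 :: complex)"
    by (simp del: of_real_diff of_real_power)
  then have "?s = 0 \<or> count_list L (of_real ?s) = 2"
    by (metis of_nat_eq_iff of_nat_numeral)
  then show ?thesis
    using trace_norm by auto
qed

end

section \<open>Product states\<close>

definition ket_norm :: "complex \<Rightarrow> real" where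
  "ket_norm x = sqrt (1 + (cmod x)\<^sup>2)"

lemma ket_norm_pos: "ket_norm x > 0"
  unfolding ket_norm_def by (simp add: add_pos_nonneg)

lemma ket_norm_sq: "(ket_norm x)\<^sup>2 = 1 + (cmod x)\<^sup>2"
  unfolding ket_norm_def by simp

lemma prod_state_carrier: "prod_state z \<in> carrier_vec (2 ^ length z)"
  by (simp add: prod_state_def)

lemma cinner_prod_state:
  assumes "length z = length a"
  shows "cinner (prod_state z) (prod_state a)
    = (\<Prod>i<length z. (1 + cnj (z!i) * a!i) / of_real (ket_norm (z!i) * ket_norm (a!i)))"
proof -
  let ?g = "\<lambda>i b. cnj ((if b then z ! i else 1) / of_real (ket_norm (z!i)))
    * ((if b then a ! i else 1) / of_real (ket_norm (a!i)))"
  have "cinner (prod_state z) (prod_state a) = (\<Sum>j::nat<2^length z. \<Prod>i<length z. ?g i (bit j i))"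
    unfolding cinner_def using assms
    by (intro sum.cong) (auto simp: prod_state_def ket_norm_def prod.distrib[symmetric])
  also have "\<dots> = (\<Prod>i<length z. ?g i False + ?g i True)"
    by (rule sum_bits_prod)
  also have "\<dots> = (\<Prod>i<length z. (1 + cnj (z!i) * a!i) / of_real (ket_norm (z!i) * ket_norm (a!i)))"
    by (intro prod.cong) (auto simp: add_divide_distrib mult.commute)
  finally show ?thesis .
qed

lemma cinner_prod_state_self: "cinner (prod_state z) (prod_state z) = 1"
proof -
  have "complex_of_real (ket_norm x * ket_norm x) = 1 + cnj x * x" for x
    by (metis ket_norm_sq complex_norm_square mult.commute of_real_1 of_real_add power2_eq_square)
  then have "(1 + cnj x * x) / complex_of_real (ket_norm x * ket_norm x) = 1" for x
    using ket_norm_pos[of x] by (metis divide_self mult_pos_pos of_real_eq_0_iff order_less_irrefl)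
  then show ?thesis
    by (simp add: cinner_prod_state)
qed

lemma cmod_cinner_prod_state_sq:
  assumes "length z = length a"
  shows "(cmod (cinner (prod_state z) (prod_state a)))\<^sup>2
    = (\<Prod>i<length z. (cmod (1 + cnj (z!i) * a!i))\<^sup>2 / ((1 + (cmod (z!i))\<^sup>2) * (1 + (cmod (a!i))\<^sup>2)))"
  using ket_norm_pos
  by (simp add: cinner_prod_state[OF assms] prod_norm[symmetric] prod_power_distrib norm_divide
      norm_mult power_divide power_mult_distrib ket_norm_sq abs_of_pos)

lemma infidelity_prod_state_le:
  assumes len: "length z = length a"
    and nz: "\<And>i. i < length z \<Longrightarrow> 1 + cnj (z ! i) * a ! i \<noteq> 0"
  shows "infidelity (prod_state z) (prod_state a)
         \<le> (\<Sum>i<length z. (cmod ((z ! i - a ! i) / (1 + cnj (z ! i) * a ! i)))\<^sup>2)"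
proof -
  define q where "q i = (cmod (1 + cnj (z!i) * a!i))\<^sup>2 / ((1 + (cmod (z!i))\<^sup>2) * (1 + (cmod (a!i))\<^sup>2))" for i
  have pos: "(1 + (cmod (z!i))\<^sup>2) * (1 + (cmod (a!i))\<^sup>2) > 0" for i
    by (simp add: add_pos_nonneg)
  have le: "(cmod (1 + cnj (z!i) * a!i))\<^sup>2 \<le> (1 + (cmod (z!i))\<^sup>2) * (1 + (cmod (a!i))\<^sup>2)" for i
    using cmod_one_plus_cnj_mult_sq[of "z!i" "a!i"] by simp
  have "1 - (cmod (cinner (prod_state z) (prod_state a)))\<^sup>2 \<le> (\<Sum>i<length z. 1 - q i)"
    unfolding cmod_cinner_prod_state_sq[OF len] q_def[symmetric]
    using le pos by (intro one_minus_prod_le_sum) (simp add: q_def)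
  also have "\<dots> \<le> (\<Sum>i<length z. (cmod ((z ! i - a ! i) / (1 + cnj (z ! i) * a ! i)))\<^sup>2)"
  proof (intro sum_mono)
    fix i
    assume "i \<in> {..<length z}"
    then have den: "(cmod (1 + cnj (z!i) * a!i))\<^sup>2 > 0"
      using nz by simp
    have "1 - q i = (cmod (z!i - a!i))\<^sup>2 / ((1 + (cmod (z!i))\<^sup>2) * (1 + (cmod (a!i))\<^sup>2))"
      using cmod_one_plus_cnj_mult_sq[of "z!i" "a!i"] pos[of i] by (simp add: q_def field_simps)
    also have "\<dots> \<le> (cmod (z!i - a!i))\<^sup>2 / (cmod (1 + cnj (z!i) * a!i))\<^sup>2"
      using le[of i] den pos[of i] by (intro divide_left_mono) (auto intro: mult_pos_pos)
    finally show "1 - q i \<le> (cmod ((z ! i - a ! i) / (1 + cnj (z ! i) * a ! i)))\<^sup>2"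
      by (simp add: norm_divide power_divide)
  qed
  finally show ?thesis .
qed

theorem corollary3p7:
  fixes z a :: "complex list"
  assumes "length z = length a"
  shows "trace_norm (proj (prod_state z) - proj (prod_state a)) / 2
           = op_norm (proj (prod_state z) - proj (prod_state a))
       \<and> ereal (op_norm (proj (prod_state z) - proj (prod_state a))) \<le> d_tan z a"
proof -
  have u: "prod_state z \<in> carrier_vec (2 ^ length z)"
    and v: "prod_state a \<in> carrier_vec (2 ^ length z)"
    using prod_state_carrier assms by metis+
  note unit = cinner_prod_state_self[of z] cinner_prod_state_self[of a]
  have "ereal (sqrt (infidelity (prod_state z) (prod_state a))) \<le> d_tan z a"
  proof (cases "\<exists>i<length z. 1 + cnj (z ! i) * a ! i = 0")
    case False
    then show ?thesis
      using infidelity_prod_state_le[OF assms] by (simp add: d_tan_def)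
  qed (simp add: d_tan_def)
  then show ?thesis
    using op_norm_diff_proj[OF u v unit] trace_norm_diff_proj[OF u v unit] by simp
qed

end
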